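(* Let $F$ be a floorplan (a dissection of a rectangle into $n$ rectangular blocks $B=\{b_1,\dots,b_n\}$) and let $G_b=(V_b,E_b)$ be its block adjacency graph formulated for obtaining a monotonically increasing (resp. decreasing) staircase cut. Let $(L,R)$ be a cut of $G_b$, i.e. a partition $V_b=L\cup R$ with the source vertex in $L$ and the sink vertex in $R$. If at least one edge of $E_b$ is a back edge with respect to $(L,R)$, i.e. is directed from a vertex of $R$ to a vertex of $L$, then the boundary between the blocks of $L$ and the blocks of $R$ is not a monotone staircase, i.e. the cut is a non-monotone staircase cut.
   Context: Block adjacency graph (BAG) $G_b=(V_b,E_b)$: $V_b=\{v_i\}$ with $v_i$ corresponding to block $b_i$. For an increasing staircase (MIS): $(v_i,v_j)\in E_b$ iff blocks $b_i,b_j$ are adjacent (share a boundary segment) and $b_i$ is to the left of or above $b_j$; the source is the vertex of the top-left corner block and the sink that of the bottom-right corner block. For a decreasing staircase (MDS): $(v_i,v_j)\in E_b$ iff $b_i,b_j$ are adjacent and $b_i$ is to the left of or below $b_j$; the source is the bottom-left corner block and the sink the top-right corner block. A monotone increasing (resp. decreasing) staircase is a rectilinear path along block boundaries from one corner of the floorplan to the opposite corner that is monotone in both coordinates, separating the floorplan into a left part $L$ (containing the source block) and a right part $R$ (containing the sink block). *)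

theory Defs
  imports "HOL-Analysis.Analysis"
begin

text \<open>The y-axis points upwards ("above" = larger y).\<close>

definition block :: "(nat \<Rightarrow> real) \<Rightarrow> (nat \<Rightarrow> real) \<Rightarrow> (nat \<Rightarrow> real) \<Rightarrow> (nat \<Rightarrow> real)
    \<Rightarrow> nat \<Rightarrow> (real \<times> real) set" where
  "block xl xr yb yt i = {xl i..xr i} \<times> {yb i..yt i}"

definition floorplan :: "real \<Rightarrow> real \<Rightarrow> nat \<Rightarrow> (nat \<Rightarrow> real) \<Rightarrow> (nat \<Rightarrow> real)
    \<Rightarrow> (nat \<Rightarrow> real) \<Rightarrow> (nat \<Rightarrow> real) \<Rightarrow> bool" where
  "floorplan W H n xl xr yb yt \<longleftrightarrow>
     0 < W \<and> 0 < H \<and> 0 < n \<and>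
     (\<forall>i<n. xl i < xr i \<and> yb i < yt i) \<and>
     (\<forall>i<n. \<forall>j<n. i \<noteq> j \<longrightarrow>
        interior (block xl xr yb yt i) \<inter> interior (block xl xr yb yt j) = {}) \<and>
     (\<Union>i<n. block xl xr yb yt i) = {0..W} \<times> {0..H}"

definition adj_left :: "(nat \<Rightarrow> real) \<Rightarrow> (nat \<Rightarrow> real) \<Rightarrow> (nat \<Rightarrow> real) \<Rightarrow> (nat \<Rightarrow> real)
    \<Rightarrow> nat \<Rightarrow> nat \<Rightarrow> bool" where
  "adj_left xl xr yb yt i j \<longleftrightarrow> xr i = xl j \<and> max (yb i) (yb j) < min (yt i) (yt j)"

definition adj_above :: "(nat \<Rightarrow> real) \<Rightarrow> (nat \<Rightarrow> real) \<Rightarrow> (nat \<Rightarrow> real) \<Rightarrow> (nat \<Rightarrow> real)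
    \<Rightarrow> nat \<Rightarrow> nat \<Rightarrow> bool" where
  "adj_above xl xr yb yt i j \<longleftrightarrow> yb i = yt j \<and> max (xl i) (xl j) < min (xr i) (xr j)"

datatype stair_kind = Increasing | Decreasing

definition bag_edges :: "stair_kind \<Rightarrow> nat \<Rightarrow> (nat \<Rightarrow> real) \<Rightarrow> (nat \<Rightarrow> real)
    \<Rightarrow> (nat \<Rightarrow> real) \<Rightarrow> (nat \<Rightarrow> real) \<Rightarrow> (nat \<times> nat) set" where
  "bag_edges k n xl xr yb yt =
     {(i, j). i < n \<and> j < n \<and>
        (adj_left xl xr yb yt i j \<or>
         (case k of Increasing \<Rightarrow> adj_above xl xr yb yt i j
                  | Decreasing \<Rightarrow> adj_above xl xr yb yt j i))}"

definition source_corner :: "stair_kind \<Rightarrow> real \<Rightarrow> real \<Rightarrow> real \<times> real" where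
  "source_corner k W H = (case k of Increasing \<Rightarrow> (0, H) | Decreasing \<Rightarrow> (0, 0))"

definition sink_corner :: "stair_kind \<Rightarrow> real \<Rightarrow> real \<Rightarrow> real \<times> real" where
  "sink_corner k W H = (case k of Increasing \<Rightarrow> (W, 0) | Decreasing \<Rightarrow> (W, H))"

definition staircase_path :: "stair_kind \<Rightarrow> real \<Rightarrow> real \<Rightarrow> (real \<times> real) list \<Rightarrow> bool" where
  "staircase_path k W H ps \<longleftrightarrow>
     ps \<noteq> [] \<and>
     hd ps = (case k of Increasing \<Rightarrow> (0, 0) | Decreasing \<Rightarrow> (0, H)) \<and>
     last ps = (case k of Increasing \<Rightarrow> (W, H) | Decreasing \<Rightarrow> (W, 0)) \<and>
     (\<forall>m < length ps - 1.
        (fst (ps ! m) = fst (ps ! Suc m) \<or> snd (ps ! m) = snd (ps ! Suc m)) \<and>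
        fst (ps ! m) \<le> fst (ps ! Suc m) \<and>
        (case k of Increasing \<Rightarrow> snd (ps ! m) \<le> snd (ps ! Suc m)
                 | Decreasing \<Rightarrow> snd (ps ! Suc m) \<le> snd (ps ! m)))"

definition path_points :: "(real \<times> real) list \<Rightarrow> (real \<times> real) set" where
  "path_points ps = (\<Union>m < length ps - 1. closed_segment (ps ! m) (ps ! Suc m)) \<union> set ps"

definition left_side :: "stair_kind \<Rightarrow> (real \<times> real) list \<Rightarrow> (real \<times> real) set" where
  "left_side k ps = {z. \<exists>p \<in> path_points ps. fst z \<le> fst p \<and>
       (case k of Increasing \<Rightarrow> snd p \<le> snd z | Decreasing \<Rightarrow> snd z \<le> snd p)}"

definition right_side :: "stair_kind \<Rightarrow> (real \<times> real) list \<Rightarrow> (real \<times> real) set" where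
  "right_side k ps = {z. \<exists>p \<in> path_points ps. fst p \<le> fst z \<and>
       (case k of Increasing \<Rightarrow> snd z \<le> snd p | Decreasing \<Rightarrow> snd p \<le> snd z)}"

definition monotone_staircase_cut :: "stair_kind \<Rightarrow> real \<Rightarrow> real \<Rightarrow> nat \<Rightarrow> (nat \<Rightarrow> real)
    \<Rightarrow> (nat \<Rightarrow> real) \<Rightarrow> (nat \<Rightarrow> real) \<Rightarrow> (nat \<Rightarrow> real) \<Rightarrow> nat set \<Rightarrow> nat set \<Rightarrow> bool" where
  "monotone_staircase_cut k W H n xl xr yb yt L R \<longleftrightarrow>
     (\<exists>ps. staircase_path k W H ps \<and>
        path_points ps \<subseteq> (\<Union>i<n. frontier (block xl xr yb yt i)) \<and>
        (\<forall>i \<in> L. block xl xr yb yt i \<subseteq> left_side k ps) \<and>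
        (\<forall>i \<in> R. block xl xr yb yt i \<subseteq> right_side k ps))"

end

theory Submission
  imports Defs
begin

text \<open>The points of a monotone staircase form a chain for the coordinatewise order in the
  direction of the staircase.  A back edge (u, v) yields a point of the R-block u lying
  strictly towards the source corner from a point of the L-block v.  As u lies on the right
  side of the staircase and v on its left side, this produces two staircase points of which
  the first lies strictly towards the source corner from the second; such points are
  incomparable, contradicting the chain property.\<close>

definition stair_le :: "stair_kind \<Rightarrow> real \<times> real \<Rightarrow> real \<times> real \<Rightarrow> bool" where
  "stair_le k a b \<longleftrightarrow> fst a \<le> fst b \<and>
     (case k of Increasing \<Rightarrow> snd a \<le> snd b | Decreasing \<Rightarrow> snd b \<le> snd a)"

lemma stair_le_refl: "stair_le k a a"
  unfolding stair_le_def by (cases k) auto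

lemma stair_le_trans: "stair_le k a b \<Longrightarrow> stair_le k b c \<Longrightarrow> stair_le k a c"
  unfolding stair_le_def by (cases k) auto

lemma stair_le_convex_combinations:
  assumes "stair_le k a b" "u \<le> v"
  shows "stair_le k ((1 - u) *\<^sub>R a + u *\<^sub>R b) ((1 - v) *\<^sub>R a + v *\<^sub>R b)"
proof -
  have "u * (fst b - fst a) \<le> v * (fst b - fst a)"
    using assms by (intro mult_right_mono) (auto simp: stair_le_def)
  moreover have "u * (snd b - snd a) \<le> v * (snd b - snd a)" if "k = Increasing"
    using assms that by (intro mult_right_mono) (auto simp: stair_le_def)
  moreover have "v * (snd b - snd a) \<le> u * (snd b - snd a)" if "k = Decreasing"
    using assms that by (intro mult_right_mono_neg) (auto simp: stair_le_def)
  ultimately show ?thesis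
    by (cases k) (auto simp: stair_le_def algebra_simps)
qed

lemma closed_segment_stair_le_total:
  assumes "stair_le k a b" "z \<in> closed_segment a b" "z' \<in> closed_segment a b"
  shows "stair_le k z z' \<or> stair_le k z' z"
proof -
  obtain u u' where "z = (1 - u) *\<^sub>R a + u *\<^sub>R b" "z' = (1 - u') *\<^sub>R a + u' *\<^sub>R b"
    using assms(2,3) by (auto simp: in_segment)
  then show ?thesis
    using stair_le_convex_combinations[OF assms(1)] by (cases "u \<le> u'") auto
qed

lemma closed_segment_stair_le_bounds:
  assumes "stair_le k a b" "z \<in> closed_segment a b"
  shows "stair_le k a z" "stair_le k z b"
proof -
  obtain u where u: "0 \<le> u" "u \<le> 1" "z = (1 - u) *\<^sub>R a + u *\<^sub>R b"
    using assms(2) by (auto simp: in_segment)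
  show "stair_le k a z"
    using stair_le_convex_combinations[OF assms(1) u(1)] u(3) by simp
  show "stair_le k z b"
    using stair_le_convex_combinations[OF assms(1) u(2)] u(3) by simp
qed

lemma staircase_path_nth_stair_le:
  assumes "staircase_path k W H ps" "i \<le> j" "j < length ps"
  shows "stair_le k (ps ! i) (ps ! j)"
  using assms(2,3)
proof (induction j rule: dec_induct)
  case base
  show ?case by (rule stair_le_refl)
next
  case (step j)
  have "stair_le k (ps ! j) (ps ! Suc j)"
    using assms(1) step.prems unfolding staircase_path_def stair_le_def by (cases k) auto
  with step show ?case by (auto intro: stair_le_trans)
qed

lemma path_points_obtain_segment:
  assumes "z \<in> path_points ps"
  obtains i j where "i \<le> j" "j \<le> Suc i" "j < length ps" "z \<in> closed_segment (ps ! i) (ps ! j)"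
proof -
  from assms consider m where "m < length ps - 1" "z \<in> closed_segment (ps ! m) (ps ! Suc m)"
    | i where "i < length ps" "z = ps ! i"
    unfolding path_points_def by (auto simp: in_set_conv_nth)
  then show thesis
  proof cases
    case (1 m)
    then show thesis by (intro that[of m "Suc m"]) auto
  next
    case (2 i)
    then show thesis by (intro that[of i i]) auto
  qed
qed

lemma staircase_path_points_stair_le_total:
  assumes sp: "staircase_path k W H ps" and "z \<in> path_points ps" "z' \<in> path_points ps"
  shows "stair_le k z z' \<or> stair_le k z' z"
proof -
  obtain i j where ij: "i \<le> j" "j \<le> Suc i" "j < length ps" "z \<in> closed_segment (ps ! i) (ps ! j)"
    using assms(2) by (rule path_points_obtain_segment)
  obtain i' j' where ij': "i' \<le> j'" "j' \<le> Suc i'" "j' < length ps"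
      "z' \<in> closed_segment (ps ! i') (ps ! j')"
    using assms(3) by (rule path_points_obtain_segment)
  have seg: "stair_le k (ps ! i) (ps ! j)" "stair_le k (ps ! i') (ps ! j')"
    using staircase_path_nth_stair_le[OF sp] ij ij' by auto
  note bounds = closed_segment_stair_le_bounds[OF seg(1) ij(4)]
    closed_segment_stair_le_bounds[OF seg(2) ij'(4)]
  consider "j \<le> i'" | "j' \<le> i" | "i = i'" "j = j'"
    using ij ij' by linarith
  then show ?thesis
  proof cases
    case 1
    then have "stair_le k (ps ! j) (ps ! i')"
      using staircase_path_nth_stair_le[OF sp] ij' by auto
    then show ?thesis using bounds stair_le_trans by blast
  next
    case 2
    then have "stair_le k (ps ! j') (ps ! i)"
      using staircase_path_nth_stair_le[OF sp] ij by auto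
    then show ?thesis using bounds stair_le_trans by blast
  next
    case 3
    then show ?thesis using closed_segment_stair_le_total[OF seg(1) ij(4)] ij'(4) by simp
  qed
qed

text \<open>Left in the sense of the cut: towards the source corner, i.e. up-left for an
  increasing and down-left for a decreasing staircase.\<close>

definition left_of :: "stair_kind \<Rightarrow> real \<times> real \<Rightarrow> real \<times> real \<Rightarrow> bool" where
  "left_of k a b \<longleftrightarrow> fst a \<le> fst b \<and>
     (case k of Increasing \<Rightarrow> snd b \<le> snd a | Decreasing \<Rightarrow> snd a \<le> snd b)"

definition strictly_left_of :: "stair_kind \<Rightarrow> real \<times> real \<Rightarrow> real \<times> real \<Rightarrow> bool" where
  "strictly_left_of k a b \<longleftrightarrow> fst a < fst b \<and>
     (case k of Increasing \<Rightarrow> snd b < snd a | Decreasing \<Rightarrow> snd a < snd b)"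

lemma left_side_iff: "z \<in> left_side k ps \<longleftrightarrow> (\<exists>p \<in> path_points ps. left_of k z p)"
  unfolding left_side_def left_of_def by (cases k) auto

lemma right_side_iff: "z \<in> right_side k ps \<longleftrightarrow> (\<exists>p \<in> path_points ps. left_of k p z)"
  unfolding right_side_def left_of_def by (cases k) auto

lemma left_of_strictly_left_of_trans:
  "left_of k a b \<Longrightarrow> strictly_left_of k b c \<Longrightarrow> left_of k c d \<Longrightarrow> strictly_left_of k a d"
  unfolding left_of_def strictly_left_of_def by (cases k) auto

lemma strictly_left_of_incomparable:
  "strictly_left_of k a b \<Longrightarrow> \<not> stair_le k a b \<and> \<not> stair_le k b a"
  unfolding strictly_left_of_def stair_le_def by (cases k) auto

lemma staircase_sides_not_strictly_left_of:
  assumes "staircase_path k W H ps" "a \<in> right_side k ps" "b \<in> left_side k ps"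
  shows "\<not> strictly_left_of k a b"
proof
  assume ab: "strictly_left_of k a b"
  obtain p q where "p \<in> path_points ps" "q \<in> path_points ps" "left_of k p a" "left_of k b q"
    using assms(2,3) by (auto simp: left_side_iff right_side_iff)
  moreover from this have "strictly_left_of k p q"
    using ab by (blast intro: left_of_strictly_left_of_trans)
  ultimately show False
    using staircase_path_points_stair_le_total[OF assms(1)] strictly_left_of_incomparable by blast
qed

lemma adj_left_strictly_left_of:
  assumes "adj_left xl xr yb yt i j" "xl i < xr i" "xl j < xr j"
  shows "\<exists>a \<in> block xl xr yb yt i. \<exists>b \<in> block xl xr yb yt j. strictly_left_of k a b"
proof -
  define lo where "lo = max (yb i) (yb j)"
  define hi where "hi = min (yt i) (yt j)"
  have "xr i = xl j" "lo < hi"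
    using assms(1) unfolding adj_left_def lo_def hi_def by auto
  then have "(xl i, hi) \<in> block xl xr yb yt i" "(xr j, lo) \<in> block xl xr yb yt j"
      "(xl i, lo) \<in> block xl xr yb yt i" "(xr j, hi) \<in> block xl xr yb yt j"
    using assms(2,3) unfolding block_def lo_def hi_def by auto
  moreover have "strictly_left_of Increasing (xl i, hi) (xr j, lo)"
      "strictly_left_of Decreasing (xl i, lo) (xr j, hi)"
    using \<open>xr i = xl j\<close> \<open>lo < hi\<close> assms(2,3) unfolding strictly_left_of_def by auto
  ultimately show ?thesis
    by (cases k) blast+
qed

lemma adj_above_strictly_left_of:
  assumes "adj_above xl xr yb yt i j" "yb i < yt i" "yb j < yt j"
  shows "\<exists>a \<in> block xl xr yb yt i. \<exists>b \<in> block xl xr yb yt j. strictly_left_of Increasing a b"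
    and "\<exists>a \<in> block xl xr yb yt j. \<exists>b \<in> block xl xr yb yt i. strictly_left_of Decreasing a b"
proof -
  define lo where "lo = max (xl i) (xl j)"
  define hi where "hi = min (xr i) (xr j)"
  have "yb i = yt j" "lo < hi"
    using assms(1) unfolding adj_above_def lo_def hi_def by auto
  then have "(lo, yt i) \<in> block xl xr yb yt i" "(hi, yb j) \<in> block xl xr yb yt j"
      "(lo, yb j) \<in> block xl xr yb yt j" "(hi, yt i) \<in> block xl xr yb yt i"
    using assms(2,3) unfolding block_def lo_def hi_def by auto
  moreover have "strictly_left_of Increasing (lo, yt i) (hi, yb j)"
      "strictly_left_of Decreasing (lo, yb j) (hi, yt i)"
    using \<open>yb i = yt j\<close> \<open>lo < hi\<close> assms(2,3) unfolding strictly_left_of_def by auto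
  ultimately show "\<exists>a \<in> block xl xr yb yt i. \<exists>b \<in> block xl xr yb yt j. strictly_left_of Increasing a b"
      "\<exists>a \<in> block xl xr yb yt j. \<exists>b \<in> block xl xr yb yt i. strictly_left_of Decreasing a b"
    by blast+
qed

lemma bag_edge_strictly_left_of:
  assumes "(u, v) \<in> bag_edges k n xl xr yb yt" "\<forall>i<n. xl i < xr i \<and> yb i < yt i"
  shows "\<exists>a \<in> block xl xr yb yt u. \<exists>b \<in> block xl xr yb yt v. strictly_left_of k a b"
proof -
  have "u < n" "v < n" and edge: "adj_left xl xr yb yt u v \<or>
      (case k of Increasing \<Rightarrow> adj_above xl xr yb yt u v | Decreasing \<Rightarrow> adj_above xl xr yb yt v u)"
    using assms(1) unfolding bag_edges_def by auto
  then have sides: "xl u < xr u" "yb u < yt u" "xl v < xr v" "yb v < yt v"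
    using assms(2) by auto
  show ?thesis
    using edge adj_left_strictly_left_of[OF _ sides(1,3)]
      adj_above_strictly_left_of(1)[OF _ sides(2,4)] adj_above_strictly_left_of(2)[OF _ sides(4,2)]
    by (cases k) auto
qed

theorem corollary1:
  fixes k :: stair_kind and W H :: real and n :: nat
    and xl xr yb yt :: "nat \<Rightarrow> real" and L R :: "nat set" and s t :: nat
  assumes fp: "floorplan W H n xl xr yb yt"
    and src: "s < n" "source_corner k W H \<in> block xl xr yb yt s"
    and snk: "t < n" "sink_corner k W H \<in> block xl xr yb yt t"
    and cut: "L \<union> R = {..<n}" "L \<inter> R = {}"
    and sL: "s \<in> L" and tR: "t \<in> R"
    and backedge: "\<exists>(u, v) \<in> bag_edges k n xl xr yb yt. u \<in> R \<and> v \<in> L"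
  shows "\<not> monotone_staircase_cut k W H n xl xr yb yt L R"
proof
  assume "monotone_staircase_cut k W H n xl xr yb yt L R"
  then obtain ps where sp: "staircase_path k W H ps"
    and L_left: "\<forall>i \<in> L. block xl xr yb yt i \<subseteq> left_side k ps"
    and R_right: "\<forall>i \<in> R. block xl xr yb yt i \<subseteq> right_side k ps"
    unfolding monotone_staircase_cut_def by blast
  obtain u v where uv: "(u, v) \<in> bag_edges k n xl xr yb yt" "u \<in> R" "v \<in> L"
    using backedge by blast
  have "\<forall>i<n. xl i < xr i \<and> yb i < yt i"
    using fp unfolding floorplan_def by blast
  then obtain a b where "a \<in> block xl xr yb yt u" "b \<in> block xl xr yb yt v"
      "strictly_left_of k a b"
    using bag_edge_strictly_left_of[OF uv(1)] by blast
  then show False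
    using staircase_sides_not_strictly_left_of[OF sp] L_left R_right uv(2,3) by blast
qed

end
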